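(* Let $c_{\mathrm{rew}},c_{\mathrm{ver}}>0$ and $c_{\min}=\min\{c_{\mathrm{rew}},c_{\mathrm{ver}}\}$. For every integer $s\ge0$ such that $S_s=\{(a,b)\in\mathbb Z_{\ge0}^2:a\le b,\ 2^sc_{\min}\le c_{\mathrm{rew}}2^b+c_{\mathrm{ver}}2^{b-a}<2^{s+1}c_{\min}\}$ is nonempty, setting $b_s^\star=\max\{b:(a,b)\in S_s\}$, $j_s^\star=\max\{b-a:(a,b)\in S_s\}$, $m_s=\lceil2^{b_s^\star+1}\rceil$ and $k_s=\lceil6\cdot2^{j_s^\star}\rceil$, the quantity $\Lambda_s:=c_{\mathrm{rew}}m_s+c_{\mathrm{ver}}k_s$ satisfies $\Lambda_s\le20\cdot2^sc_{\min}$. *)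

theory Defs
  imports Complex_Main
begin

definition S_set :: "real \<Rightarrow> real \<Rightarrow> nat \<Rightarrow> (nat \<times> nat) set" where
  "S_set crew cver s = {(a, b). a \<le> b \<and>
      2 ^ s * min crew cver \<le> crew * 2 ^ b + cver * 2 ^ (b - a) \<and>
      crew * 2 ^ b + cver * 2 ^ (b - a) < 2 ^ (s + 1) * min crew cver}"

end

theory Submission
  imports Defs
begin

text \<open>Both summands defining membership in \<open>S_s\<close> are positive, so each of them alone is
  below \<open>2^(s+1) c_min\<close>; applied to the pairs realising \<open>b_s\<^sup>\<star>\<close> and \<open>j_s\<^sup>\<star>\<close> this gives
  \<open>\<Lambda>_s < 2 \<cdot> 2^(s+1) c_min + 6 \<cdot> 2^(s+1) c_min = 16 \<cdot> 2^s c_min\<close>. The same bound on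
  \<open>c_rew 2^b\<close> forces \<open>b \<le> s\<close>, so \<open>S_s\<close> is finite and both maxima are attained.\<close>

lemma S_set_crew_term_less:
  assumes "cver \<ge> 0" and "(a, b) \<in> S_set crew cver s"
  shows "crew * 2 ^ b < 2 ^ (s + 1) * min crew cver"
proof -
  have "cver * 2 ^ (b - a) \<ge> 0" using assms(1) by simp
  with assms(2) show ?thesis unfolding S_set_def by auto
qed

lemma S_set_cver_term_less:
  assumes "crew \<ge> 0" and "(a, b) \<in> S_set crew cver s"
  shows "cver * 2 ^ (b - a) < 2 ^ (s + 1) * min crew cver"
proof -
  have "crew * 2 ^ b \<ge> 0" using assms(1) by simp
  with assms(2) show ?thesis unfolding S_set_def by auto
qed

lemma S_set_subset_atMost:
  assumes "crew > 0" and "cver \<ge> 0"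
  shows "S_set crew cver s \<subseteq> {..s} \<times> {..s}"
proof (rule subrelI)
  fix a b
  assume ab: "(a, b) \<in> S_set crew cver s"
  have "crew * 2 ^ b < 2 ^ (s + 1) * min crew cver"
    using S_set_crew_term_less[OF assms(2) ab] .
  also have "\<dots> \<le> crew * 2 ^ (s + 1)" by simp
  finally have "(2::real) ^ b < 2 ^ (s + 1)" using assms(1) by simp
  then have "b < s + 1" by (rule power_less_imp_less_exp[rotated]) simp
  moreover have "a \<le> b" using ab unfolding S_set_def by simp
  ultimately show "(a, b) \<in> {..s} \<times> {..s}" by simp
qed

lemma finite_S_set:
  assumes "crew > 0" and "cver \<ge> 0"
  shows "finite (S_set crew cver s)"
  using S_set_subset_atMost[OF assms] by (rule finite_subset) simp

theorem lemma8:
  fixes crew cver :: real and s :: nat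
  assumes "crew > 0" and "cver > 0"
    and "S_set crew cver s \<noteq> {}"
  shows "let cmin = min crew cver;
             bstar = Max {b. \<exists>a. (a, b) \<in> S_set crew cver s};
             jstar = Max {b - a | a b. (a, b) \<in> S_set crew cver s};
             m = \<lceil>(2::real) ^ (bstar + 1)\<rceil>;
             k = \<lceil>6 * (2::real) ^ jstar\<rceil>
         in crew * of_int m + cver * of_int k \<le> 20 * 2 ^ s * cmin"
proof -
  let ?S = "S_set crew cver s" and ?c = "min crew cver"
  have fin: "finite ?S" using finite_S_set assms(1,2) by simp
  have "{b. \<exists>a. (a, b) \<in> ?S} = snd ` ?S" by force
  then obtain a\<^sub>1 b\<^sub>1 where "(a\<^sub>1, b\<^sub>1) \<in> ?S" and bstar: "Max {b. \<exists>a. (a, b) \<in> ?S} = b\<^sub>1"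
    using Max_in[of "snd ` ?S"] fin assms(3) by fastforce
  then have "crew * 2 ^ b\<^sub>1 < 2 ^ (s + 1) * ?c"
    using S_set_crew_term_less assms(2) by simp
  moreover have "{b - a | a b. (a, b) \<in> ?S} = (\<lambda>(a, b). b - a) ` ?S" by force
  then obtain a\<^sub>2 b\<^sub>2 where "(a\<^sub>2, b\<^sub>2) \<in> ?S" and jstar: "Max {b - a | a b. (a, b) \<in> ?S} = b\<^sub>2 - a\<^sub>2"
    using Max_in[of "(\<lambda>(a, b). b - a) ` ?S"] fin assms(3) by fastforce
  then have "cver * 2 ^ (b\<^sub>2 - a\<^sub>2) < 2 ^ (s + 1) * ?c"
    using S_set_cver_term_less assms(1) by simp
  moreover have "2 ^ (s + 1) * ?c = 2 * (2 ^ s * ?c)" and "2 ^ s * ?c > 0"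
    using assms(1,2) by simp_all
  ultimately have "2 * (crew * 2 ^ b\<^sub>1) + 6 * (cver * 2 ^ (b\<^sub>2 - a\<^sub>2)) \<le> 20 * (2 ^ s * ?c)"
    by linarith
  then show ?thesis unfolding Let_def bstar jstar by (simp add: algebra_simps)
qed

end
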